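(* Let $K_0,K_1\subset\mathbb D^n$ be non-pluripolar, complete logarithmically convex, compact Reinhardt sets, let $Q_j=\mathrm{Log}\,K_j$ ($j=0,1$) and $Q_t=(1-t)Q_0+tQ_1$ (Minkowski combination) for $0<t<1$. Then $$\mathrm{Covol}(Q_t^\circ)\le \mathrm{Covol}(Q_0^\circ)^{1-t}\,\mathrm{Covol}(Q_1^\circ)^t,\qquad 0<t<1,$$ and if equality holds for some $t\in(0,1)$, then $Q_0=Q_1$.
   Context: $\mathbb D^n$ is the unit polydisk; $\mathbb R^n_-$ and $\mathbb R^n_+$ are the negative and positive orthants. A set $K\subset\mathbb C^n$ is Reinhardt if invariant under $(z_l)\mapsto(e^{i\theta_l}z_l)$. A compact Reinhardt $K\subset\mathbb D^n$ is complete logarithmically convex if $\mathrm{Log}\,K=\{s\in\mathbb R^n:\ (e^{s_1},\dots,e^{s_n})\in K\}$ is a convex subset of $\mathbb R^n_-$ with $\mathrm{Log}\,K+\mathbb R^n_-\subset\mathrm{Log}\,K$. For $Q\subset\mathbb R^n_-$, the copolar is $Q^\circ=\{x\in\mathbb R^n_+:\ \langle x,y\rangle\le -1\ \forall y\in Q\}$ and $\mathrm{Covol}(Q^\circ)=\mathrm{Vol}(\mathbb R^n_+\setminus Q^\circ)$ (Lebesgue measure). *)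

theory Defs
  imports "HOL-Analysis.Analysis"
begin

text \<open>Points of C^n are modelled as complex^'n, points of R^n as real^'n, with n = CARD('n).\<close>

definition unit_polydisk :: "(complex^'n) set" where
  "unit_polydisk = {z. \<forall>i. norm (z$i) < 1}"

definition neg_orthant :: "(real^'n) set" where
  "neg_orthant = {s. \<forall>i. s$i \<le> 0}"

definition pos_orthant :: "(real^'n) set" where
  "pos_orthant = {x. \<forall>i. 0 \<le> x$i}"

definition reinhardt :: "(complex^'n) set \<Rightarrow> bool" where
  "reinhardt K \<longleftrightarrow> (\<forall>z\<in>K. \<forall>\<theta>::real^'n. (\<chi> l. cis (\<theta>$l) * z$l) \<in> K)"

definition Log_set :: "(complex^'n) set \<Rightarrow> (real^'n) set" where
  "Log_set K = {s. (\<chi> l. complex_of_real (exp (s$l))) \<in> K}"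

definition complete_log_convex :: "(complex^'n) set \<Rightarrow> bool" where
  "complete_log_convex K \<longleftrightarrow>
     convex (Log_set K) \<and> Log_set K \<subseteq> neg_orthant \<and>
     (\<forall>s\<in>Log_set K. \<forall>y\<in>neg_orthant. s + y \<in> Log_set K)"

text \<open>Plurisubharmonic functions on an open set V (values in [-inf, +inf)):
  upper semicontinuous, and satisfying the sub-mean value inequality on every closed
  complex disc {a + zeta b : |zeta| <= 1} contained in V. The mean value of the
  upper semicontinuous function on the circle is expressed (equivalently, by monotone
  convergence) as the infimum of the means of its continuous real majorants.\<close>

definition psh_on :: "(complex^'n) set \<Rightarrow> (complex^'n \<Rightarrow> ereal) \<Rightarrow> bool" where
  "psh_on V u \<longleftrightarrow> open V \<and>
     (\<forall>z\<in>V. u z < \<infinity>) \<and>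
     (\<forall>c::real. openin (top_of_set V) {z\<in>V. u z < ereal c}) \<and>
     (\<forall>a b. (\<forall>\<zeta>. cmod \<zeta> \<le> 1 \<longrightarrow> (\<chi> l. a$l + \<zeta> * b$l) \<in> V) \<longrightarrow>
        (\<forall>h::real\<Rightarrow>real. continuous_on {0..2*pi} h \<longrightarrow>
            (\<forall>\<theta>\<in>{0..2*pi}. u (\<chi> l. a$l + cis \<theta> * b$l) \<le> ereal (h \<theta>)) \<longrightarrow>
            u a \<le> ereal (integral {0..2*pi} h / (2*pi))))"

definition pluripolar :: "(complex^'n) set \<Rightarrow> bool" where
  "pluripolar E \<longleftrightarrow>
     (\<forall>p\<in>E. \<exists>V u. p \<in> V \<and> open V \<and> connected V \<and> psh_on V u \<and>
        (\<exists>z\<in>V. u z \<noteq> -\<infinity>) \<and> (\<forall>z\<in>E \<inter> V. u z = -\<infinity>))"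

definition copolar :: "(real^'n) set \<Rightarrow> (real^'n) set" where
  "copolar Q = {x \<in> pos_orthant. \<forall>y\<in>Q. x \<bullet> y \<le> -1}"

definition covol :: "(real^'n) set \<Rightarrow> real" where
  "covol P = measure lborel (pos_orthant - P)"

definition mink_comb :: "real \<Rightarrow> (real^'n) set \<Rightarrow> (real^'n) set \<Rightarrow> (real^'n) set" where
  "mink_comb t Q0 Q1 = {(1 - t) *\<^sub>R a + t *\<^sub>R b | a b. a \<in> Q0 \<and> b \<in> Q1}"

end

theory Submission
  imports Defs "HOL-Probability.Distributions" "HOL-Complex_Analysis.Complex_Analysis"
begin

text \<open>For \<open>Q \<subseteq> \<real>\<^sup>n\<^sub>-\<close> and \<open>x\<close> in the positive orthant let \<open>\<phi>_Q(x) = inf {-\<langle>x,q\<rangle> | q \<in> Q}\<close>.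
  This function is homogeneous of degree one and the complement of the copolar \<open>Q\<degree>\<close> in the
  positive orthant is \<open>{\<phi>_Q < 1}\<close>, so the layer-cake formula gives
  \<open>\<integral> exp (-\<phi>_Q) = n! Covol(Q\<degree>)\<close>. Along Minkowski combinations
  \<open>\<phi>_Q\<^sub>t \<ge> (1 - t) \<phi>_Q\<^sub>0 + t \<phi>_Q\<^sub>1\<close>, and Hoelder's inequality turns this into the covolume
  inequality. Equality in Hoelder's inequality forces \<open>\<phi>_Q\<^sub>1 - \<phi>_Q\<^sub>0\<close> to be a.e. constant, hence
  zero since both vanish at the origin, and a closed convex complete set is recovered from its
  \<open>\<phi>\<close> by separation.

  Non-pluripolarity is only needed to get \<open>Log K \<noteq> {}\<close>: otherwise every point of the Reinhardt
  set \<open>K\<close> has a zero coordinate, so \<open>K\<close> lies in the \<open>-\<infinity>\<close> set of the plurisubharmonic function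
  \<open>ln |z\<^sub>1 \<cdots> z\<^sub>n|\<close>, whose sub-mean value property is Jensen's inequality. Compactness inside the
  polydisk keeps \<open>Log K\<close> uniformly inside the open negative orthant, which makes the covolumes
  finite.\<close>

section \<open>The layer-cake formula and Hoelder's inequality\<close>

lemma emeasure_lborel_scaleR_vimage:
  fixes A :: "'a::euclidean_space set"
  assumes "A \<in> sets borel" "0 < s"
  shows "emeasure lborel A = ennreal (s ^ DIM('a)) * emeasure lborel ((\<lambda>x. s *\<^sub>R x) -` A)"
proof -
  have "emeasure lborel A = emeasure (density (distr lborel borel (\<lambda>x. 0 + s *\<^sub>R x)) (\<lambda>_. \<bar>s\<bar> ^ DIM('a))) A"
    using lborel_affine[of s 0] assms(2) by (metis less_irrefl)
  also have "\<dots> = ennreal (s ^ DIM('a)) * emeasure lborel ((\<lambda>x. s *\<^sub>R x) -` A)"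
    using assms by (simp add: emeasure_density emeasure_distr nn_integral_cmult_indicator)
  finally show ?thesis .
qed

lemma nn_integral_exp_neg_greaterThan:
  "(\<integral>\<^sup>+s. ennreal (exp (- s)) * indicator {c<..} s \<partial>lborel) = ennreal (exp (- c))"
proof -
  have "(\<integral>\<^sup>+s. ennreal (exp (- s)) * indicator {c<..} s \<partial>lborel)
      = (\<integral>\<^sup>+s. ennreal (exp (- (c + 1 * s))) * indicator {c<..} (c + 1 * s) \<partial>lborel)"
    using nn_integral_real_affine[of "\<lambda>s. ennreal (exp (- s)) * indicator {c<..} s" 1 c] by simp
  also have "\<dots> = (\<integral>\<^sup>+s. ennreal (exp (- c)) * (ennreal (0 ^ 0 * exp (- s)) * indicator {0..} s) \<partial>lborel)"
  proof (rule nn_integral_cong_AE)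
    show "AE s in lborel. ennreal (exp (- (c + 1 * s))) * indicator {c<..} (c + 1 * s)
        = ennreal (exp (- c)) * (ennreal (0 ^ 0 * exp (- s)) * indicator {0..} s)"
      using AE_lborel_singleton[of 0]
      by eventually_elim (auto simp: indicator_def exp_diff exp_minus ennreal_mult'[symmetric] field_simps)
  qed
  also have "\<dots> = ennreal (exp (- c))"
    using nn_intergal_power_times_exp_Ici[of 0] by (simp add: nn_integral_cmult)
  finally show ?thesis .
qed

lemma nn_integral_exp_neg_layers:
  fixes f :: "'a::euclidean_space \<Rightarrow> real" and C :: "'a set"
  assumes [measurable]: "f \<in> borel_measurable borel" "C \<in> sets borel"
  shows "(\<integral>\<^sup>+x. ennreal (indicator C x * exp (- f x)) \<partial>lborel)
       = (\<integral>\<^sup>+s. ennreal (exp (- s)) * emeasure lborel {x \<in> C. f x < s} \<partial>lborel)"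
proof -
  let ?S = "{p. fst p \<in> C \<and> f (fst p) < snd p}"
  have "(\<integral>\<^sup>+x. ennreal (indicator C x * exp (- f x)) \<partial>lborel)
      = (\<integral>\<^sup>+x. (\<integral>\<^sup>+s. ennreal (exp (- s)) * indicator ?S (x, s) \<partial>lborel) \<partial>lborel)"
  proof (rule nn_integral_cong)
    fix x :: 'a
    have "(\<integral>\<^sup>+s. ennreal (exp (- s)) * indicator ?S (x, s) \<partial>lborel)
        = (\<integral>\<^sup>+s. indicator C x * (ennreal (exp (- s)) * indicator {f x<..} s) \<partial>lborel)"
      by (rule nn_integral_cong) (auto simp: indicator_def)
    also have "\<dots> = indicator C x * ennreal (exp (- f x))"
      by (simp add: nn_integral_cmult nn_integral_exp_neg_greaterThan)
    finally show "ennreal (indicator C x * exp (- f x))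
        = (\<integral>\<^sup>+s. ennreal (exp (- s)) * indicator ?S (x, s) \<partial>lborel)"
      by (simp add: indicator_def)
  qed
  also have "\<dots> = (\<integral>\<^sup>+s. (\<integral>\<^sup>+x. ennreal (exp (- s)) * indicator ?S (x, s) \<partial>lborel) \<partial>lborel)"
    by (rule lborel_pair.Fubini'[symmetric]) measurable
  also have "\<dots> = (\<integral>\<^sup>+s. ennreal (exp (- s)) * emeasure lborel {x \<in> C. f x < s} \<partial>lborel)"
  proof (rule nn_integral_cong)
    fix s :: real
    have "(\<integral>\<^sup>+x. ennreal (exp (- s)) * indicator ?S (x, s) \<partial>lborel)
        = (\<integral>\<^sup>+x. ennreal (exp (- s)) * indicator {x \<in> C. f x < s} x \<partial>lborel)"
      by (rule nn_integral_cong) (auto simp: indicator_def)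
    then show "(\<integral>\<^sup>+x. ennreal (exp (- s)) * indicator ?S (x, s) \<partial>lborel)
        = ennreal (exp (- s)) * emeasure lborel {x \<in> C. f x < s}"
      by (simp add: nn_integral_cmult_indicator)
  qed
  finally show ?thesis .
qed

text \<open>By homogeneity the sublevel set \<open>{f < s}\<close> of \<open>f\<close> on the cone \<open>C\<close> is \<open>s\<close> times \<open>{f < 1}\<close>,
  so the layers contribute \<open>\<integral>\<^sub>0\<^sup>\<infinity> s\<^sup>n e\<^sup>-\<^sup>s ds = n!\<close>.\<close>

lemma nn_integral_exp_neg_homogeneous:
  fixes f :: "'a::euclidean_space \<Rightarrow> real" and C :: "'a set"
  assumes [measurable]: "f \<in> borel_measurable borel" "C \<in> sets borel"
    and nonneg: "\<And>x. 0 \<le> f x"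
    and homogeneous: "\<And>s x. 0 < s \<Longrightarrow> f (s *\<^sub>R x) = s * f x"
    and cone: "\<And>s x. 0 < s \<Longrightarrow> s *\<^sub>R x \<in> C \<longleftrightarrow> x \<in> C"
  shows "(\<integral>\<^sup>+x. ennreal (indicator C x * exp (- f x)) \<partial>lborel)
       = ennreal (fact DIM('a)) * emeasure lborel {x \<in> C. f x < 1}"
proof -
  let ?A = "\<lambda>s. {x \<in> C. f x < s}"
  have layer: "ennreal (exp (- s)) * emeasure lborel (?A s)
      = ennreal (s ^ DIM('a) * exp (- s)) * indicator {0..} s * emeasure lborel (?A 1)" for s
  proof (cases "0 < s")
    case True
    have "(\<lambda>x. s *\<^sub>R x) -` ?A s = ?A 1"
      using True by (auto simp: cone homogeneous)
    then have "emeasure lborel (?A s) = ennreal (s ^ DIM('a)) * emeasure lborel (?A 1)"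
      using emeasure_lborel_scaleR_vimage[of "?A s" s] True by simp
    moreover have "indicator {0..} s = (1::ennreal)"
      using True by simp
    moreover have "ennreal (s ^ DIM('a) * exp (- s)) = ennreal (s ^ DIM('a)) * ennreal (exp (- s))"
      using True by (intro ennreal_mult) auto
    ultimately show ?thesis
      by (simp only: mult_1_left mult_1_right mult_ac)
  next
    case False
    have "\<not> f x < s" for x
      using nonneg[of x] False by linarith
    then have empty: "?A s = {}" by blast
    show ?thesis
      unfolding empty using False by (cases "s = 0") (auto simp: indicator_def)
  qed
  have "(\<integral>\<^sup>+x. ennreal (indicator C x * exp (- f x)) \<partial>lborel)
      = (\<integral>\<^sup>+s. ennreal (s ^ DIM('a) * exp (- s)) * indicator {0..} s * emeasure lborel (?A 1) \<partial>lborel)"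
    by (simp add: nn_integral_exp_neg_layers layer)
  also have "\<dots> = ennreal (fact DIM('a)) * emeasure lborel (?A 1)"
    using nn_intergal_power_times_exp_Ici[of "DIM('a)"] by (simp add: nn_integral_multc)
  finally show ?thesis .
qed

lemma ln_less_minus_one:
  fixes x :: real
  assumes "0 < x" "x \<noteq> 1"
  shows "ln x < x - 1"
proof -
  have "sqrt x \<noteq> 1" using assms by simp
  have "ln x = 2 * ln (sqrt x)"
    using assms by (simp add: ln_sqrt)
  also have "\<dots> \<le> 2 * (sqrt x - 1)"
    using assms ln_le_minus_one[of "sqrt x"] by simp
  also have "\<dots> < x - 1"
  proof -
    have "0 < (sqrt x - 1)\<^sup>2" using \<open>sqrt x \<noteq> 1\<close> by simp
    moreover have "(sqrt x - 1)\<^sup>2 = x - 1 - 2 * (sqrt x - 1)"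
      using assms by (simp add: power2_eq_square algebra_simps)
    ultimately show ?thesis by linarith
  qed
  finally show ?thesis .
qed

lemma powr_mult_le_weighted_mean:
  fixes u v t :: real
  assumes "0 \<le> u" "0 \<le> v" "0 \<le> t" "t \<le> 1"
  shows "u powr (1 - t) * v powr t \<le> (1 - t) * u + t * v"
proof (cases "u = 0 \<or> v = 0")
  case True
  then show ?thesis using assms by auto
next
  case False
  then show ?thesis using assms by (intro Youngs_inequality_0) auto
qed

lemma powr_mult_less_weighted_mean:
  fixes u v t :: real
  assumes "0 \<le> u" "0 \<le> v" "u \<noteq> v" "0 < t" "t < 1"
  shows "u powr (1 - t) * v powr t < (1 - t) * u + t * v"
proof (cases "u = 0 \<or> v = 0")
  case True
  then show ?thesis using assms by auto
next
  case False
  then have "0 < u" "0 < v" using assms by auto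
  define m where "m = (1 - t) * u + t * v"
  have "0 < m" using \<open>0 < u\<close> \<open>0 < v\<close> assms by (simp add: m_def add_pos_pos)
  have "(1 - t) * ln (u / m) \<le> (1 - t) * (u / m - 1)" "t * ln (v / m) \<le> t * (v / m - 1)"
    using \<open>0 < u\<close> \<open>0 < v\<close> \<open>0 < m\<close> assms
    by (intro mult_left_mono ln_le_minus_one; simp)+
  moreover have "u / m \<noteq> 1 \<or> v / m \<noteq> 1"
    using \<open>u \<noteq> v\<close> \<open>0 < m\<close> by auto
  then have "(1 - t) * ln (u / m) < (1 - t) * (u / m - 1) \<or> t * ln (v / m) < t * (v / m - 1)"
    using \<open>0 < u\<close> \<open>0 < v\<close> \<open>0 < m\<close> assms
    by (auto intro!: mult_strict_left_mono ln_less_minus_one)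
  ultimately have "(1 - t) * ln (u / m) + t * ln (v / m) < (1 - t) * (u / m - 1) + t * (v / m - 1)"
    by linarith
  also have "\<dots> = 0"
    using \<open>0 < m\<close> by (simp add: m_def field_simps)
  finally have "(1 - t) * ln u + t * ln v < ln m"
    using \<open>0 < u\<close> \<open>0 < v\<close> \<open>0 < m\<close> by (simp add: ln_div algebra_simps)
  then have "exp ((1 - t) * ln u + t * ln v) < m"
    using \<open>0 < m\<close> by (metis exp_less_cancel_iff exp_ln)
  then show ?thesis
    using \<open>0 < u\<close> \<open>0 < v\<close> by (simp add: m_def powr_def exp_add mult.commute)
qed

text \<open>Hoelder's inequality for exponents \<open>1/(1-t)\<close> and \<open>1/t\<close>, proved by integrating Young's
  inequality for \<open>f/\<integral>f\<close> and \<open>g/\<integral>g\<close>; the strict Young inequality gives the equality case.\<close>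

lemma
  fixes f g :: "'a \<Rightarrow> real"
  assumes f: "integrable M f" "\<And>x. 0 \<le> f x" and g: "integrable M g" "\<And>x. 0 \<le> g x"
    and pos: "0 < integral\<^sup>L M f" "0 < integral\<^sup>L M g" and t: "0 < t" "t < 1"
  shows integrable_powr_mult: "integrable M (\<lambda>x. f x powr (1 - t) * g x powr t)"
    and integral_powr_mult_le:
      "(\<integral>x. f x powr (1 - t) * g x powr t \<partial>M) \<le> integral\<^sup>L M f powr (1 - t) * integral\<^sup>L M g powr t"
    and integral_powr_mult_eq_imp_AE:
      "(\<integral>x. f x powr (1 - t) * g x powr t \<partial>M) = integral\<^sup>L M f powr (1 - t) * integral\<^sup>L M g powr t
        \<Longrightarrow> AE x in M. f x / integral\<^sup>L M f = g x / integral\<^sup>L M g"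
proof -
  define a b where "a = integral\<^sup>L M f" and "b = integral\<^sup>L M g"
  define K where "K = a powr (1 - t) * b powr t"
  define P where "P = (\<lambda>x. f x powr (1 - t) * g x powr t)"
  define H where "H = (\<lambda>x. K * ((1 - t) * (f x / a) + t * (g x / b)))"
  have "0 < a" "0 < b" "0 < K" using pos by (simp_all add: a_def b_def K_def)
  have P_eq: "P x = K * ((f x / a) powr (1 - t) * (g x / b) powr t)" for x
    using \<open>0 < a\<close> \<open>0 < b\<close> by (simp add: P_def K_def powr_divide field_simps)
  have P_le_H: "P x \<le> H x" for x
    unfolding P_eq H_def using \<open>0 < K\<close> \<open>0 < a\<close> \<open>0 < b\<close> f g t
    by (intro mult_left_mono powr_mult_le_weighted_mean) auto
  have P_less_H: "P x < H x" if "f x / a \<noteq> g x / b" for x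
    unfolding P_eq H_def using that \<open>0 < K\<close> \<open>0 < a\<close> \<open>0 < b\<close> f g t
    by (intro mult_strict_left_mono powr_mult_less_weighted_mean) auto
  have H: "integrable M H" "integral\<^sup>L M H = K"
    using f g \<open>0 < a\<close> \<open>0 < b\<close> by (simp_all add: H_def a_def b_def)
  have P_meas: "P \<in> borel_measurable M"
    using f g unfolding P_def by measurable
  show int_P: "integrable M P"
    using Bochner_Integration.integrable_bound[OF H(1) P_meas] P_le_H
    by (auto simp: P_def intro: order_trans[OF _ abs_ge_self])
  show "integral\<^sup>L M P \<le> K"
    unfolding H(2)[symmetric] using int_P H(1) P_le_H by (intro integral_mono)
  assume "integral\<^sup>L M P = K"
  then have "integral\<^sup>L M (\<lambda>x. H x - P x) = 0"
    using int_P H by simp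
  then have "AE x in M. H x - P x = 0"
    using int_P H(1) P_le_H by (subst (asm) integral_nonneg_eq_0_iff_AE) auto
  then show "AE x in M. f x / a = g x / b"
    by eventually_elim (use P_less_H in force)
qed

section \<open>Co-support functions and covolumes of copolars\<close>

definition uniformly_negative :: "(real^'n) set \<Rightarrow> bool" where
  "uniformly_negative Q \<longleftrightarrow> (\<exists>d>0. \<forall>q\<in>Q. \<forall>i. q$i \<le> - d)"

text \<open>On the positive orthant and for \<open>Q \<subseteq> \<real>\<^sup>n\<^sub>-\<close> this is minus the support function of \<open>Q\<close>;
  the truncation at \<open>0\<close> only makes it nonnegative everywhere.\<close>

definition co_support :: "(real^'n) set \<Rightarrow> real^'n \<Rightarrow> real" where
  "co_support Q x = Inf ((\<lambda>q. max 0 (- (x \<bullet> q))) ` Q)"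

lemma bdd_below_co_support: "bdd_below ((\<lambda>q. max 0 (- (x \<bullet> q))) ` Q)"
  by (rule bdd_belowI[of _ 0]) auto

lemma co_support_less_iff:
  "Q \<noteq> {} \<Longrightarrow> co_support Q x < c \<longleftrightarrow> (\<exists>q\<in>Q. max 0 (- (x \<bullet> q)) < c)"
  unfolding co_support_def by (subst cInf_less_iff) (auto simp: bdd_below_co_support)

lemma co_support_le: "q \<in> Q \<Longrightarrow> co_support Q x \<le> max 0 (- (x \<bullet> q))"
  unfolding co_support_def by (rule cInf_lower) (auto simp: bdd_below_co_support)

lemma co_support_greatest:
  "Q \<noteq> {} \<Longrightarrow> (\<And>q. q \<in> Q \<Longrightarrow> c \<le> max 0 (- (x \<bullet> q))) \<Longrightarrow> c \<le> co_support Q x"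
  unfolding co_support_def by (rule cInf_greatest) auto

lemma co_support_nonneg: "Q \<noteq> {} \<Longrightarrow> 0 \<le> co_support Q x"
  by (rule co_support_greatest) auto

lemma borel_measurable_co_support [measurable]: "Q \<noteq> {} \<Longrightarrow> co_support Q \<in> borel_measurable borel"
proof (subst borel_measurable_iff_less, intro allI)
  fix c :: real
  assume "Q \<noteq> {}"
  then have "{x \<in> space borel. co_support Q x < c} = (\<Union>q\<in>Q. {x. max 0 (- (x \<bullet> q)) < c})"
    by (auto simp: co_support_less_iff)
  also have "open \<dots>"
    by (intro open_UN ballI open_Collect_less continuous_intros)
  finally show "{x \<in> space borel. co_support Q x < c} \<in> sets borel" by simp
qed

lemma co_support_scaleR:
  assumes "Q \<noteq> {}" "0 < s"
  shows "co_support Q (s *\<^sub>R x) = s * co_support Q x"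
proof -
  have max_scale: "max 0 (- ((s *\<^sub>R x) \<bullet> q)) = s * max 0 (- (x \<bullet> q))" for q
    using \<open>0 < s\<close> by (simp add: max_def mult_le_0_iff zero_le_mult_iff)
  have "co_support Q (s *\<^sub>R x) < c \<longleftrightarrow> s * co_support Q x < c" for c
  proof -
    have "co_support Q (s *\<^sub>R x) < c \<longleftrightarrow> (\<exists>q\<in>Q. s * max 0 (- (x \<bullet> q)) < c)"
      unfolding co_support_less_iff[OF assms(1)] max_scale ..
    also have "\<dots> \<longleftrightarrow> (\<exists>q\<in>Q. max 0 (- (x \<bullet> q)) < c / s)"
      using \<open>0 < s\<close> by (simp only: pos_less_divide_eq mult.commute)
    also have "\<dots> \<longleftrightarrow> s * co_support Q x < c"
      unfolding co_support_less_iff[OF assms(1), symmetric]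
      using \<open>0 < s\<close> by (simp add: pos_less_divide_eq mult.commute)
    finally show ?thesis .
  qed
  then show ?thesis
    by (metis linorder_neqE less_irrefl)
qed

lemma inner_nonpos_pos_neg_orthant:
  assumes "x \<in> pos_orthant" "q \<in> neg_orthant"
  shows "x \<bullet> q \<le> 0"
proof -
  have "0 \<le> - (x \<bullet> q)"
    using assms unfolding inner_vec_def pos_orthant_def neg_orthant_def
    by (simp add: sum_nonneg mult_nonneg_nonpos flip: sum_negf)
  then show ?thesis by simp
qed

lemma component_mult_le_neg_inner:
  assumes "x \<in> pos_orthant" "q \<in> neg_orthant"
  shows "x$i * - q$i \<le> - (x \<bullet> q)"
proof -
  have "x$i * - q$i \<le> (\<Sum>j\<in>UNIV. x$j * - q$j)"
    using assms by (intro member_le_sum mult_nonneg_nonneg) (auto simp: pos_orthant_def neg_orthant_def)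
  then show ?thesis
    by (simp add: inner_vec_def sum_negf)
qed

lemma co_support_mono:
  assumes "Q \<noteq> {}" "Q \<subseteq> neg_orthant" "y - x \<in> pos_orthant"
  shows "co_support Q x \<le> co_support Q y"
proof (rule co_support_greatest[OF \<open>Q \<noteq> {}\<close>])
  fix q assume "q \<in> Q"
  then have "(y - x) \<bullet> q \<le> 0"
    using assms by (intro inner_nonpos_pos_neg_orthant) auto
  then have "max 0 (- (x \<bullet> q)) \<le> max 0 (- (y \<bullet> q))"
    by (simp add: inner_diff_left)
  then show "co_support Q x \<le> max 0 (- (y \<bullet> q))"
    using co_support_le[OF \<open>q \<in> Q\<close>, of x] by linarith
qed

lemma abs_inner_le_box:
  fixes x q :: "real^'n"
  assumes "x \<in> cbox 0 (\<chi> i. e)"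
  shows "\<bar>x \<bullet> q\<bar> \<le> e * (\<Sum>j\<in>UNIV. \<bar>q$j\<bar>)"
proof -
  have "\<bar>x \<bullet> q\<bar> \<le> (\<Sum>j\<in>UNIV. \<bar>x$j * q$j\<bar>)"
    unfolding inner_vec_def inner_real_def by (rule sum_abs)
  also have "\<dots> \<le> (\<Sum>j\<in>UNIV. e * \<bar>q$j\<bar>)"
    using assms by (intro sum_mono) (auto simp: mem_box_cart abs_mult intro!: mult_right_mono)
  finally show ?thesis by (simp add: sum_distrib_left)
qed

lemma co_support_le_box:
  fixes q x :: "real^'n"
  assumes "q \<in> Q" "x \<in> cbox 0 (\<chi> i. e)" "0 \<le> e"
  shows "co_support Q x \<le> e * (\<Sum>j\<in>UNIV. \<bar>q$j\<bar>)"
  using co_support_le[OF assms(1), of x] abs_inner_le_box[OF assms(2), of q] assms(3)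
  by (simp add: sum_nonneg)

lemma co_support_mink_comb_ge:
  assumes "Q0 \<noteq> {}" "Q1 \<noteq> {}" "Q0 \<subseteq> neg_orthant" "Q1 \<subseteq> neg_orthant"
    and "0 \<le> t" "t \<le> 1" and x: "x \<in> pos_orthant"
  shows "(1 - t) * co_support Q0 x + t * co_support Q1 x \<le> co_support (mink_comb t Q0 Q1) x"
proof (rule co_support_greatest)
  show "mink_comb t Q0 Q1 \<noteq> {}" using assms by (auto simp: mink_comb_def)
  fix q assume "q \<in> mink_comb t Q0 Q1"
  then obtain a b where ab: "a \<in> Q0" "b \<in> Q1" "q = (1 - t) *\<^sub>R a + t *\<^sub>R b"
    by (auto simp: mink_comb_def)
  have "co_support Q0 x \<le> - (x \<bullet> a)" "co_support Q1 x \<le> - (x \<bullet> b)"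
    using co_support_le[OF ab(1), of x] co_support_le[OF ab(2), of x]
      inner_nonpos_pos_neg_orthant[OF x, of a] inner_nonpos_pos_neg_orthant[OF x, of b] ab assms
    by auto
  then have "(1 - t) * co_support Q0 x + t * co_support Q1 x \<le> (1 - t) * - (x \<bullet> a) + t * - (x \<bullet> b)"
    using assms by (intro add_mono mult_left_mono) auto
  also have "\<dots> = - (x \<bullet> q)"
    by (simp add: ab(3) inner_add_right algebra_simps)
  finally show "(1 - t) * co_support Q0 x + t * co_support Q1 x \<le> max 0 (- (x \<bullet> q))"
    by simp
qed

lemma pos_orthant_borel [measurable]: "(pos_orthant :: (real^'n) set) \<in> sets borel"
proof -
  have "pos_orthant = (\<Inter>i. {x::real^'n. 0 \<le> x$i})" by (auto simp: pos_orthant_def)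
  also have "closed \<dots>" by (intro closed_INT ballI closed_Collect_le continuous_intros)
  finally show ?thesis by simp
qed

lemma scaleR_mem_pos_orthant_iff: "0 < s \<Longrightarrow> s *\<^sub>R x \<in> pos_orthant \<longleftrightarrow> x \<in> pos_orthant"
  by (simp add: pos_orthant_def zero_le_mult_iff)

lemma pos_orthant_diff_copolar:
  "Q \<noteq> {} \<Longrightarrow> pos_orthant - copolar Q = {x \<in> pos_orthant. co_support Q x < 1}"
  by (auto simp: copolar_def co_support_less_iff not_le)

lemma uniformly_negative_imp_subset_neg_orthant:
  "uniformly_negative Q \<Longrightarrow> Q \<subseteq> neg_orthant"
  unfolding uniformly_negative_def neg_orthant_def
  by (auto, meson order_trans neg_le_0_iff_le less_imp_le)

lemma uniformly_negative_mink_comb: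
  fixes Q0 Q1 :: "(real^'n) set"
  assumes "uniformly_negative Q0" "uniformly_negative Q1" "0 \<le> t" "t \<le> 1"
  shows "uniformly_negative (mink_comb t Q0 Q1)"
proof -
  obtain d0 d1 where d: "0 < d0" "0 < d1" and "\<forall>q\<in>Q0. \<forall>i. q$i \<le> - d0" "\<forall>q\<in>Q1. \<forall>i. q$i \<le> - d1"
    using assms(1,2) by (auto simp: uniformly_negative_def)
  then have Q: "\<forall>q\<in>Q0. \<forall>i. q$i \<le> - min d0 d1" "\<forall>q\<in>Q1. \<forall>i. q$i \<le> - min d0 d1"
    by (meson min.cobounded1 min.cobounded2 neg_le_iff_le order_trans)+
  have "q$i \<le> - min d0 d1" if q: "q \<in> mink_comb t Q0 Q1" for q :: "real^'n" and i
  proof -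
    obtain a b where ab: "a \<in> Q0" "b \<in> Q1" "q = (1 - t) *\<^sub>R a + t *\<^sub>R b"
      using q unfolding mink_comb_def by blast
    have "a$i \<le> - min d0 d1" "b$i \<le> - min d0 d1"
      using Q ab by auto
    then have "(1 - t) * a$i + t * b$i \<le> (1 - t) * - min d0 d1 + t * - min d0 d1"
      using assms(3,4) by (intro add_mono mult_left_mono) auto
    then show ?thesis by (simp add: ab algebra_simps)
  qed
  then show ?thesis
    using d by (auto simp: uniformly_negative_def intro!: exI[of _ "min d0 d1"])
qed

lemma emeasure_lborel_cbox_pos:
  fixes u v :: "real^'n"
  assumes "\<And>i. u$i < v$i"
  shows "0 < emeasure lborel (cbox u v)"
proof -
  have "\<forall>b\<in>Basis. u \<bullet> b < v \<bullet> b"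
    using assms by (auto simp: Basis_vec_def cart_eq_inner_axis[symmetric])
  then show ?thesis
    by (auto simp: emeasure_lborel_cbox_eq inner_diff_left less_imp_le intro!: prod_pos)
qed

lemma AE_lborel_cbox_contradiction:
  fixes u v :: "real^'n"
  assumes "AE x in lborel. P x" "\<And>i. u$i < v$i" "\<And>x. x \<in> cbox u v \<Longrightarrow> \<not> P x"
  shows False
proof -
  obtain N where N: "{x \<in> space lborel. \<not> P x} \<subseteq> N" "N \<in> null_sets lborel"
    using AE_E[OF assms(1)] by (auto simp: null_sets_def)
  then have "emeasure lborel (cbox u v) \<le> emeasure lborel N"
    using assms(3) by (intro emeasure_mono) auto
  then show False
    using N(2) emeasure_lborel_cbox_pos[OF assms(2)] by auto
qed

lemma emeasure_pos_orthant_diff_copolar_pos: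
  fixes Q :: "(real^'n) set"
  assumes "Q \<noteq> {}"
  shows "0 < emeasure lborel (pos_orthant - copolar Q)"
proof -
  obtain q where "q \<in> Q" using assms by auto
  define S where "S = (\<Sum>j\<in>UNIV. \<bar>q$j\<bar>)"
  have "0 \<le> S" by (simp add: S_def sum_nonneg)
  define e where "e = 1 / (S + 1)"
  have e: "0 < e" "e * S < 1"
    using \<open>0 \<le> S\<close> by (auto simp: e_def field_simps)
  have "cbox 0 (\<chi> i. e) \<subseteq> {x \<in> pos_orthant. co_support Q x < 1}"
  proof
    fix x :: "real^'n" assume x: "x \<in> cbox 0 (\<chi> i. e)"
    then have "co_support Q x < 1"
      using co_support_le_box[OF \<open>q \<in> Q\<close> x] e by (simp add: S_def)
    then show "x \<in> {x \<in> pos_orthant. co_support Q x < 1}"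
      using x by (auto simp: mem_box_cart pos_orthant_def)
  qed
  then have "emeasure lborel (cbox 0 (\<chi> i. e) :: (real^'n) set) \<le> emeasure lborel {x \<in> pos_orthant. co_support Q x < 1}"
    by (intro emeasure_mono) (use borel_measurable_co_support[OF assms] in measurable)
  moreover have "0 < emeasure lborel (cbox 0 (\<chi> i. e) :: (real^'n) set)"
    using e by (intro emeasure_lborel_cbox_pos) simp
  ultimately show ?thesis by (simp add: pos_orthant_diff_copolar[OF assms])
qed

lemma emeasure_pos_orthant_diff_copolar_finite:
  fixes Q :: "(real^'n) set"
  assumes "uniformly_negative Q"
  shows "emeasure lborel (pos_orthant - copolar Q) < \<infinity>"
proof -
  obtain d where d: "0 < d" "\<forall>q\<in>Q. \<forall>i. q$i \<le> - d"
    using assms by (auto simp: uniformly_negative_def)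
  have "pos_orthant - copolar Q \<subseteq> cbox 0 (\<chi> i. 1 / d)"
  proof
    fix x :: "real^'n" assume x: "x \<in> pos_orthant - copolar Q"
    then obtain q where q: "q \<in> Q" "- (x \<bullet> q) < 1"
      by (auto simp: copolar_def not_le)
    have "x$i \<le> 1 / d" for i
    proof -
      have "q$i \<le> - d"
        using d q by blast
      then have "x$i * d \<le> x$i * - q$i"
        using x by (intro mult_left_mono) (auto simp: pos_orthant_def)
      also have "\<dots> \<le> - (x \<bullet> q)"
        using x q uniformly_negative_imp_subset_neg_orthant[OF assms]
        by (intro component_mult_le_neg_inner) auto
      finally show ?thesis
        using d q by (simp add: field_simps)
    qed
    then show "x \<in> cbox 0 (\<chi> i. 1 / d)"
      using x by (auto simp: mem_box_cart pos_orthant_def)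
  qed
  then have "emeasure lborel (pos_orthant - copolar Q) \<le> emeasure lborel (cbox 0 (\<chi> i. 1 / d) :: (real^'n) set)"
    by (intro emeasure_mono) auto
  also have "\<dots> < \<infinity>" by (rule emeasure_lborel_cbox_finite)
  finally show ?thesis .
qed

definition copolar_density :: "(real^'n) set \<Rightarrow> real^'n \<Rightarrow> real" where
  "copolar_density Q x = indicator pos_orthant x * exp (- co_support Q x)"

lemma copolar_density_nonneg: "0 \<le> copolar_density Q x"
  by (simp add: copolar_density_def)

lemma borel_measurable_copolar_density [measurable]:
  "Q \<noteq> {} \<Longrightarrow> copolar_density Q \<in> borel_measurable borel"
  unfolding copolar_density_def by measurable

lemma has_bochner_integral_copolar_density:
  fixes Q :: "(real^'n) set"
  assumes "Q \<noteq> {}" "uniformly_negative Q"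
  shows "has_bochner_integral lborel (copolar_density Q) (fact CARD('n) * covol (copolar Q))"
proof (rule has_bochner_integral_nn_integral)
  have "emeasure lborel (pos_orthant - copolar Q) = ennreal (covol (copolar Q))"
    using emeasure_pos_orthant_diff_copolar_finite[OF assms(2)]
    by (simp add: covol_def emeasure_eq_ennreal_measure)
  moreover have "(\<integral>\<^sup>+x. ennreal (copolar_density Q x) \<partial>lborel)
      = ennreal (fact CARD('n)) * emeasure lborel (pos_orthant - copolar Q)"
    unfolding copolar_density_def pos_orthant_diff_copolar[OF assms(1)]
    using assms(1)
    by (intro nn_integral_exp_neg_homogeneous[where 'a = "real^'n", simplified])
      (auto simp: co_support_nonneg co_support_scaleR scaleR_mem_pos_orthant_iff)
  ultimately show "(\<integral>\<^sup>+x. ennreal (copolar_density Q x) \<partial>lborel)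
      = ennreal (fact CARD('n) * covol (copolar Q))"
    by (simp add: ennreal_mult covol_def)
qed (use assms in \<open>auto simp: copolar_density_nonneg covol_def\<close>)

lemma covol_copolar_pos:
  assumes "Q \<noteq> {}" "uniformly_negative Q"
  shows "0 < covol (copolar Q)"
  using emeasure_pos_orthant_diff_copolar_pos[OF assms(1)]
    emeasure_pos_orthant_diff_copolar_finite[OF assms(2)]
  by (simp add: covol_def emeasure_eq_ennreal_measure)

lemma AE_co_support_eq_shift_imp_zero:
  fixes Q0 Q1 :: "(real^'n) set"
  assumes "Q0 \<noteq> {}" "Q1 \<noteq> {}"
    and AE: "AE x in lborel. x \<in> pos_orthant \<longrightarrow> co_support Q1 x = co_support Q0 x + \<kappa>"
  shows "\<kappa> = 0"
proof (rule ccontr)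
  assume "\<kappa> \<noteq> 0"
  obtain q0 q1 where "q0 \<in> Q0" "q1 \<in> Q1" using assms by auto
  define S where "S = (\<Sum>j\<in>UNIV. \<bar>q0$j\<bar>) + (\<Sum>j\<in>UNIV. \<bar>q1$j\<bar>)"
  have "0 \<le> S" by (simp add: S_def sum_nonneg)
  define e where "e = \<bar>\<kappa>\<bar> / (2 * (S + 1))"
  have e: "0 < e" "e * S < \<bar>\<kappa>\<bar>"
    using \<open>\<kappa> \<noteq> 0\<close> \<open>0 \<le> S\<close> by (auto simp: e_def field_simps intro!: add_nonneg_pos)
  show False
  proof (rule AE_lborel_cbox_contradiction[OF AE, of 0 "\<chi> i. e"])
    show "(0::real^'n)$i < (\<chi> i. e)$i" for i using e by simp
    fix x :: "real^'n" assume x: "x \<in> cbox 0 (\<chi> i. e)"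
    have "co_support Q0 x + co_support Q1 x \<le> e * S"
      using co_support_le_box[OF \<open>q0 \<in> Q0\<close> x] co_support_le_box[OF \<open>q1 \<in> Q1\<close> x] e
      by (simp add: S_def distrib_left)
    moreover have "x \<in> pos_orthant"
      using x by (auto simp: mem_box_cart pos_orthant_def)
    ultimately show "\<not> (x \<in> pos_orthant \<longrightarrow> co_support Q1 x = co_support Q0 x + \<kappa>)"
      using co_support_nonneg[OF \<open>Q0 \<noteq> {}\<close>, of x] co_support_nonneg[OF \<open>Q1 \<noteq> {}\<close>, of x] e
      by auto
  qed
qed

text \<open>Separate \<open>y\<close> from \<open>Q\<close> by a hyperplane; downward closedness of \<open>Q\<close> forces its normal into the
  negative orthant.\<close>

lemma co_support_gt_if_not_mem:
  fixes Q :: "(real^'n) set"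
  assumes "Q \<noteq> {}" "closed Q" "convex Q" "\<forall>q\<in>Q. \<forall>z\<in>neg_orthant. q + z \<in> Q" "y \<notin> Q"
  obtains x where "x \<in> pos_orthant" "- (x \<bullet> y) < co_support Q x"
proof -
  obtain w \<beta> where w: "w \<bullet> y < \<beta>" "\<forall>q\<in>Q. \<beta> < w \<bullet> q"
    using separating_hyperplane_closed_point[OF assms(3,2,5)] by blast
  have "- w \<in> pos_orthant"
    unfolding pos_orthant_def
  proof (intro CollectI allI, rule ccontr)
    fix i assume "\<not> 0 \<le> (- w)$i"
    then have "0 < w$i" by simp
    obtain q where "q \<in> Q" using assms(1) by auto
    define s where "s = (\<bar>\<beta>\<bar> + \<bar>w \<bullet> q\<bar>) / w$i"
    have "0 \<le> s" using \<open>0 < w$i\<close> by (simp add: s_def)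
    define z :: "real^'n" where "z = (\<chi> j. if j = i then - s else 0)"
    have "z \<in> neg_orthant" using \<open>0 \<le> s\<close> by (simp add: neg_orthant_def z_def)
    then have "\<beta> < w \<bullet> (q + z)"
      using assms(4) w(2) \<open>q \<in> Q\<close> by blast
    moreover have "w \<bullet> z = - s * w$i"
      by (simp add: z_def inner_vec_def if_distrib[of "\<lambda>u. w$_ * u"] cong: if_cong)
    moreover have "s * w$i = \<bar>\<beta>\<bar> + \<bar>w \<bullet> q\<bar>"
      using \<open>0 < w$i\<close> by (simp add: s_def)
    ultimately show False by (simp add: inner_add_right)
  qed
  moreover have "\<beta> \<le> co_support Q (- w)"
    using w(2) assms(1) by (intro co_support_greatest) (auto simp: less_imp_le)
  ultimately show ?thesis
    using w(1) that[of "- w"] by simp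
qed

lemma exists_box_neg_inner_less_co_support:
  fixes Q :: "(real^'n) set"
  assumes "Q \<noteq> {}" "Q \<subseteq> neg_orthant" "x \<in> pos_orthant" "- (x \<bullet> y) < co_support Q x"
  obtains e where "0 < e"
    "\<And>z. z \<in> cbox x (x + (\<chi> i. e)) \<Longrightarrow> z \<in> pos_orthant \<and> - (z \<bullet> y) < co_support Q z"
proof -
  define gap where "gap = co_support Q x + x \<bullet> y"
  define S where "S = (\<Sum>j\<in>UNIV. \<bar>y$j\<bar>)"
  have "0 < gap" "0 \<le> S" using assms(4) by (simp_all add: gap_def S_def sum_nonneg)
  define e where "e = gap / (2 * (S + 1))"
  have e: "0 < e" "e * S < gap"
    using \<open>0 < gap\<close> \<open>0 \<le> S\<close> by (auto simp: e_def field_simps intro!: add_nonneg_pos)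
  have "z \<in> pos_orthant \<and> - (z \<bullet> y) < co_support Q z" if "z \<in> cbox x (x + (\<chi> i. e))" for z
  proof
    have zx: "x$i \<le> z$i" "z$i \<le> e + x$i" for i
      using that by (auto simp: mem_box_cart add.commute)
    then have "z - x \<in> cbox 0 (\<chi> i. e)" "z - x \<in> pos_orthant"
      by (simp_all add: mem_box_cart pos_orthant_def diff_le_eq)
    show "z \<in> pos_orthant"
      using assms(3) zx(1) by (auto simp: pos_orthant_def intro: order_trans)
    have "- (z \<bullet> y) \<le> - (x \<bullet> y) + e * S"
      using abs_inner_le_box[OF \<open>z - x \<in> cbox 0 (\<chi> i. e)\<close>, of y] by (simp add: S_def inner_diff_left)
    also have "\<dots> < co_support Q x"
      using e by (simp add: gap_def)
    also have "\<dots> \<le> co_support Q z"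
      using assms(1,2) \<open>z - x \<in> pos_orthant\<close> by (rule co_support_mono)
    finally show "- (z \<bullet> y) < co_support Q z" .
  qed
  then show ?thesis
    using that \<open>0 < e\<close> by blast
qed

lemma subset_if_AE_co_support_le:
  fixes Q0 Q1 :: "(real^'n) set"
  assumes "Q0 \<subseteq> neg_orthant" "Q1 \<noteq> {}" "Q1 \<subseteq> neg_orthant"
    and "closed Q1" "convex Q1" "\<forall>q\<in>Q1. \<forall>z\<in>neg_orthant. q + z \<in> Q1"
    and AE: "AE x in lborel. x \<in> pos_orthant \<longrightarrow> co_support Q1 x \<le> co_support Q0 x"
  shows "Q0 \<subseteq> Q1"
proof
  fix y assume "y \<in> Q0"
  show "y \<in> Q1"
  proof (rule ccontr)
    assume "y \<notin> Q1"
    then obtain x where "x \<in> pos_orthant" "- (x \<bullet> y) < co_support Q1 x"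
      using co_support_gt_if_not_mem assms(2,4,5,6) by blast
    then obtain e where "0 < e" and
      box: "\<And>z. z \<in> cbox x (x + (\<chi> i. e)) \<Longrightarrow> z \<in> pos_orthant \<and> - (z \<bullet> y) < co_support Q1 z"
      using exists_box_neg_inner_less_co_support assms(2,3) by blast
    show False
    proof (rule AE_lborel_cbox_contradiction[OF AE, of x "x + (\<chi> i. e)"])
      show "x$i < (x + (\<chi> i. e))$i" for i using \<open>0 < e\<close> by simp
      fix z :: "real^'n" assume "z \<in> cbox x (x + (\<chi> i. e))"
      then have "z \<in> pos_orthant" "- (z \<bullet> y) < co_support Q1 z"
        using box by auto
      moreover have "co_support Q0 z \<le> - (z \<bullet> y)"
        using co_support_le[OF \<open>y \<in> Q0\<close>, of z] inner_nonpos_pos_neg_orthant[OF \<open>z \<in> pos_orthant\<close>, of y]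
          assms(1) \<open>y \<in> Q0\<close> by auto
      ultimately show "\<not> (z \<in> pos_orthant \<longrightarrow> co_support Q1 z \<le> co_support Q0 z)"
        by simp
    qed
  qed
qed

lemma copolar_density_mink_comb_le:
  assumes "Q0 \<noteq> {}" "Q1 \<noteq> {}" "Q0 \<subseteq> neg_orthant" "Q1 \<subseteq> neg_orthant" "0 \<le> t" "t \<le> 1"
  shows "copolar_density (mink_comb t Q0 Q1) x \<le> copolar_density Q0 x powr (1 - t) * copolar_density Q1 x powr t"
proof (cases "x \<in> pos_orthant")
  case True
  have "exp (- co_support (mink_comb t Q0 Q1) x) \<le> exp (- ((1 - t) * co_support Q0 x + t * co_support Q1 x))"
    using co_support_mink_comb_ge[OF assms True] by simp
  also have "\<dots> = exp (- co_support Q0 x) powr (1 - t) * exp (- co_support Q1 x) powr t"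
    by (simp add: powr_def exp_add[symmetric] algebra_simps)
  finally show ?thesis
    using True by (simp add: copolar_density_def)
qed (simp add: copolar_density_def)

lemma
  fixes Q :: "(real^'n) set"
  assumes "Q \<noteq> {}" "uniformly_negative Q"
  shows integrable_copolar_density: "integrable lborel (copolar_density Q)"
    and integral_copolar_density: "integral\<^sup>L lborel (copolar_density Q) = fact CARD('n) * covol (copolar Q)"
  using has_bochner_integral_copolar_density[OF assms] by (simp_all add: has_bochner_integral_iff)

lemma fact_covol_copolar_mink_comb_le_integral:
  fixes Q0 Q1 :: "(real^'n) set"
  assumes "Q0 \<noteq> {}" "Q1 \<noteq> {}" "uniformly_negative Q0" "uniformly_negative Q1" "0 < t" "t < 1"
  shows "fact CARD('n) * covol (copolar (mink_comb t Q0 Q1))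
      \<le> (\<integral>x. copolar_density Q0 x powr (1 - t) * copolar_density Q1 x powr t \<partial>lborel)"
proof -
  have "mink_comb t Q0 Q1 \<noteq> {}"
    using assms(1,2) by (auto simp: mink_comb_def)
  moreover have "uniformly_negative (mink_comb t Q0 Q1)"
    using assms by (intro uniformly_negative_mink_comb) auto
  ultimately have "fact CARD('n) * covol (copolar (mink_comb t Q0 Q1))
      = integral\<^sup>L lborel (copolar_density (mink_comb t Q0 Q1))"
    and "integrable lborel (copolar_density (mink_comb t Q0 Q1))"
    by (simp_all add: integral_copolar_density integrable_copolar_density)
  moreover have "integrable lborel (\<lambda>x. copolar_density Q0 x powr (1 - t) * copolar_density Q1 x powr t)"
    using assms by (intro integrable_powr_mult)
      (simp_all add: integrable_copolar_density integral_copolar_density copolar_density_nonneg covol_copolar_pos)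
  ultimately show ?thesis
    using assms uniformly_negative_imp_subset_neg_orthant
    by (auto intro!: integral_mono copolar_density_mink_comb_le)
qed

lemma
  fixes Q0 Q1 :: "(real^'n) set"
  assumes "Q0 \<noteq> {}" "Q1 \<noteq> {}" "uniformly_negative Q0" "uniformly_negative Q1" "0 < t" "t < 1"
  shows integral_copolar_density_powr_le:
      "(\<integral>x. copolar_density Q0 x powr (1 - t) * copolar_density Q1 x powr t \<partial>lborel)
        \<le> fact CARD('n) * (covol (copolar Q0) powr (1 - t) * covol (copolar Q1) powr t)"
    and integral_copolar_density_powr_eq_imp_AE:
      "(\<integral>x. copolar_density Q0 x powr (1 - t) * copolar_density Q1 x powr t \<partial>lborel)
        = fact CARD('n) * (covol (copolar Q0) powr (1 - t) * covol (copolar Q1) powr t)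
       \<Longrightarrow> AE x in lborel. copolar_density Q0 x / covol (copolar Q0) = copolar_density Q1 x / covol (copolar Q1)"
proof -
  let ?c = "fact CARD('n) :: real"
  have V: "0 < covol (copolar Q0)" "0 < covol (copolar Q1)"
    using assms by (simp_all add: covol_copolar_pos)
  have scale: "(?c * a) powr (1 - t) * (?c * b) powr t = ?c * (a powr (1 - t) * b powr t)"
    if "0 < a" "0 < b" for a b
    using that by (simp add: powr_mult powr_add[symmetric] mult_ac)
  note hoelder = integral_powr_mult_le integral_powr_mult_eq_imp_AE
  note hoelder = hoelder[of lborel "copolar_density Q0" "copolar_density Q1" t,
      unfolded integral_copolar_density[OF assms(1,3)] integral_copolar_density[OF assms(2,4)] scale[OF V]]
  show "(\<integral>x. copolar_density Q0 x powr (1 - t) * copolar_density Q1 x powr t \<partial>lborel)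
      \<le> ?c * (covol (copolar Q0) powr (1 - t) * covol (copolar Q1) powr t)"
    using assms V
    by (intro hoelder(1)) (simp_all add: integrable_copolar_density copolar_density_nonneg)
  assume "(\<integral>x. copolar_density Q0 x powr (1 - t) * copolar_density Q1 x powr t \<partial>lborel)
      = ?c * (covol (copolar Q0) powr (1 - t) * covol (copolar Q1) powr t)"
  then have "AE x in lborel. copolar_density Q0 x / (?c * covol (copolar Q0)) = copolar_density Q1 x / (?c * covol (copolar Q1))"
    using assms V
    by (intro hoelder(2)) (simp_all add: integrable_copolar_density copolar_density_nonneg)
  then show "AE x in lborel. copolar_density Q0 x / covol (copolar Q0) = copolar_density Q1 x / covol (copolar Q1)"
    by eventually_elim (simp add: mult.commute[of ?c] flip: divide_divide_eq_left)
qed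

theorem covol_copolar_mink_comb_le:
  fixes Q0 Q1 :: "(real^'n) set"
  assumes "Q0 \<noteq> {}" "Q1 \<noteq> {}" "uniformly_negative Q0" "uniformly_negative Q1" "0 < t" "t < 1"
  shows "covol (copolar (mink_comb t Q0 Q1)) \<le> covol (copolar Q0) powr (1 - t) * covol (copolar Q1) powr t"
  using order_trans[OF fact_covol_copolar_mink_comb_le_integral integral_copolar_density_powr_le, OF assms assms]
  by simp

theorem covol_copolar_mink_comb_eq_imp_eq:
  fixes Q0 Q1 :: "(real^'n) set"
  assumes ne: "Q0 \<noteq> {}" "Q1 \<noteq> {}" and neg: "uniformly_negative Q0" "uniformly_negative Q1"
    and t: "0 < t" "t < 1"
    and Q0: "closed Q0" "convex Q0" "\<forall>q\<in>Q0. \<forall>z\<in>neg_orthant. q + z \<in> Q0"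
    and Q1: "closed Q1" "convex Q1" "\<forall>q\<in>Q1. \<forall>z\<in>neg_orthant. q + z \<in> Q1"
    and eq: "covol (copolar (mink_comb t Q0 Q1)) = covol (copolar Q0) powr (1 - t) * covol (copolar Q1) powr t"
  shows "Q0 = Q1"
proof -
  define V0 V1 where "V0 = covol (copolar Q0)" and "V1 = covol (copolar Q1)"
  have "0 < V0" "0 < V1"
    using ne neg by (simp_all add: V0_def V1_def covol_copolar_pos)
  have "AE x in lborel. copolar_density Q0 x / V0 = copolar_density Q1 x / V1"
    using fact_covol_copolar_mink_comb_le_integral[OF ne neg t] integral_copolar_density_powr_le[OF ne neg t]
    by (intro integral_copolar_density_powr_eq_imp_AE[OF ne neg t, folded V0_def V1_def])
      (simp add: eq V0_def V1_def)
  then have shift: "AE x in lborel. x \<in> pos_orthant \<longrightarrow> co_support Q1 x = co_support Q0 x + (ln V0 - ln V1)"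
  proof eventually_elim
    case (elim x)
    show ?case
    proof
      assume "x \<in> pos_orthant"
      then have "ln (exp (- co_support Q0 x) / V0) = ln (exp (- co_support Q1 x) / V1)"
        using elim by (simp add: copolar_density_def)
      then show "co_support Q1 x = co_support Q0 x + (ln V0 - ln V1)"
        using \<open>0 < V0\<close> \<open>0 < V1\<close> by (simp add: ln_div)
    qed
  qed
  then have "AE x in lborel. x \<in> pos_orthant \<longrightarrow> co_support Q1 x = co_support Q0 x"
    using AE_co_support_eq_shift_imp_zero[OF ne shift] by simp
  then have "AE x in lborel. x \<in> pos_orthant \<longrightarrow> co_support Q1 x \<le> co_support Q0 x"
    and "AE x in lborel. x \<in> pos_orthant \<longrightarrow> co_support Q0 x \<le> co_support Q1 x"
    by (eventually_elim, simp)+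
  moreover have "Q0 \<subseteq> neg_orthant" "Q1 \<subseteq> neg_orthant"
    using neg by (simp_all add: uniformly_negative_imp_subset_neg_orthant)
  ultimately show "Q0 = Q1"
    using subset_if_AE_co_support_le[of Q0 Q1] subset_if_AE_co_support_le[of Q1 Q0] ne Q0 Q1
    by blast
qed

section \<open>Jensen's inequality and plurisubharmonicity of \<open>ln |F|\<close>\<close>

lemma prod_lessThan_shift_periodic:
  fixes g :: "nat \<Rightarrow> 'a::comm_monoid_mult"
  assumes periodic: "\<And>k. g (k + N) = g k"
  shows "(\<Prod>k<N. g (j + k)) = (\<Prod>k<N. g k)"
proof (induction j)
  case (Suc j)
  have "(\<Prod>k<N. g (Suc j + k)) = (\<Prod>k<N. g (j + k))"
  proof (cases N)
    case (Suc M)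
    have "(\<Prod>k<N. g (Suc j + k)) = (\<Prod>k<M. g (j + Suc k)) * g (j + N)"
      by (simp add: Suc prod.lessThan_Suc)
    also have "g (j + N) = g j"
      using periodic[of j] by (simp add: add.commute)
    also have "(\<Prod>k<M. g (j + Suc k)) * g j = (\<Prod>k<N. g (j + k))"
      unfolding Suc prod.lessThan_Suc_shift by (simp add: mult.commute)
    finally show ?thesis .
  qed simp
  with Suc.IH show ?case by simp
qed simp

lemma maximum_modulus_unit_circle:
  fixes f :: "complex \<Rightarrow> complex"
  assumes "f holomorphic_on UNIV"
  obtains z where "cmod z = 1" "cmod (f 0) \<le> cmod (f z)"
proof -
  have cont: "continuous_on UNIV f"
    using assms holomorphic_on_imp_continuous_on by blast
  obtain z where z: "z \<in> sphere 0 1" "\<And>y. y \<in> sphere 0 1 \<Longrightarrow> cmod (f y) \<le> cmod (f z)"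
    using continuous_attains_sup[of "sphere 0 1" "\<lambda>y. cmod (f y)"] cont
    by (auto simp: continuous_on_norm continuous_on_subset intro: exI[of _ 1])
  have "cmod (f 0) \<le> cmod (f z)"
  proof (rule maximum_modulus_frontier[of f "cball 0 1"])
    show "f holomorphic_on interior (cball 0 1)"
      using assms holomorphic_on_subset by blast
    show "continuous_on (closure (cball 0 1)) f"
      using cont continuous_on_subset by blast
  qed (use z in auto)
  then show ?thesis
    using z that by simp
qed

lemma unit_circle_equally_spaced:
  fixes z :: complex
  assumes "cmod z = 1" "0 < d"
  obtains \<phi> j where "0 \<le> \<phi>" "\<phi> \<le> d" "z = cis (\<phi> + real j * d)"
proof -
  define \<theta> where "\<theta> = Arg2pi z"
  have "z = cis \<theta>"
    using assms(1) by (simp add: \<theta>_def complex_norm_eq_1_exp cis_conv_exp mult.commute)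
  moreover have "0 \<le> \<theta>"
    using Arg2pi[of z] by (simp add: \<theta>_def)
  define j where "j = nat \<lfloor>\<theta> / d\<rfloor>"
  have "real j \<le> \<theta> / d" "\<theta> / d < real j + 1"
    using \<open>0 \<le> \<theta>\<close> assms(2) by (simp_all add: j_def)
  ultimately show ?thesis
    using that[of "\<theta> - real j * d" j] assms(2) by (simp add: field_simps)
qed

lemma prod_cis_equally_spaced_shift:
  fixes f :: "complex \<Rightarrow> 'a::comm_monoid_mult"
  assumes "real N * d = 2 * pi"
  shows "(\<Prod>k<N. f (cis (\<phi> + real (j + k) * d))) = (\<Prod>k<N. f (cis (\<phi> + real k * d)))"
proof (rule prod_lessThan_shift_periodic[where g = "\<lambda>k. f (cis (\<phi> + real k * d))"])
  fix k
  have "cis (\<phi> + real (k + N) * d) = cis (\<phi> + real k * d) * cis (2 * pi)"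
    using assms by (simp add: cis_mult algebra_simps)
  then show "f (cis (\<phi> + real (k + N) * d)) = f (cis (\<phi> + real k * d))"
    by simp
qed

text \<open>The maximum modulus principle for \<open>w \<mapsto> \<Prod>\<^sub>k p(w \<omega>\<^sup>k)\<close>, \<open>\<omega>\<close> a primitive \<open>N\<close>-th root of unity:
  this function is invariant under \<open>w \<mapsto> \<omega> w\<close>, so its maximum on the unit circle is attained on
  the arc of angles \<open>[0, 2\<pi>/N]\<close>.\<close>

lemma norm_power_le_prod_equally_spaced:
  fixes p :: "complex \<Rightarrow> complex"
  assumes "p holomorphic_on UNIV" "0 < N"
  obtains \<phi> where "0 \<le> \<phi>" "\<phi> \<le> 2 * pi / N"
    "cmod (p 0) ^ N \<le> (\<Prod>k<N. cmod (p (cis (\<phi> + real k * (2 * pi / N)))))"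
proof -
  define d where "d = 2 * pi / N"
  have "0 < d" "real N * d = 2 * pi"
    using assms(2) by (simp_all add: d_def)
  define R where "R = (\<lambda>w. \<Prod>k<N. p (w * cis d ^ k))"
  have R_cis: "R (cis \<theta>) = (\<Prod>k<N. p (cis (\<theta> + real k * d)))" for \<theta>
    by (simp add: R_def Complex.DeMoivre cis_mult mult.commute)
  have "R holomorphic_on UNIV"
    unfolding R_def
    by (intro holomorphic_on_prod holomorphic_on_compose_gen[OF _ assms(1), unfolded o_def])
      (auto intro: holomorphic_intros)
  then obtain z where "cmod z = 1" "cmod (R 0) \<le> cmod (R z)"
    by (rule maximum_modulus_unit_circle)
  then obtain \<phi> j where \<phi>: "0 \<le> \<phi>" "\<phi> \<le> d" and z: "z = cis (\<phi> + real j * d)"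
    using unit_circle_equally_spaced \<open>0 < d\<close> by blast
  have "cmod (p 0) ^ N = cmod (R 0)"
    by (simp add: R_def norm_power)
  also have "\<dots> \<le> cmod (R z)"
    by fact
  also have "R z = (\<Prod>k<N. p (cis (\<phi> + real (j + k) * d)))"
    by (simp add: z R_cis algebra_simps)
  also have "\<dots> = (\<Prod>k<N. p (cis (\<phi> + real k * d)))"
    using \<open>real N * d = 2 * pi\<close> by (rule prod_cis_equally_spaced_shift)
  finally show ?thesis
    using that \<phi> by (simp add: d_def prod_norm)
qed

lemma integral_uniform_partition:
  fixes h :: "real \<Rightarrow> real"
  assumes "h integrable_on {0..real N * d}" "0 \<le> d"
  shows "integral {0..real N * d} h = (\<Sum>k<N. integral {real k * d..real (Suc k) * d} h)"
  using assms(1)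
proof (induction N)
  case (Suc N)
  have "h integrable_on {0..real N * d}"
    by (rule integrable_subinterval_real[OF Suc.prems]) (use assms(2) in \<open>auto intro: mult_right_mono\<close>)
  moreover have "integral {0..real N * d} h + integral {real N * d..real (Suc N) * d} h
      = integral {0..real (Suc N) * d} h"
    using Suc.prems assms(2) by (intro Henstock_Kurzweil_Integration.integral_combine) (auto simp: algebra_simps)
  ultimately show ?case
    using Suc.IH by simp
qed simp

lemma length_mult_le_integral:
  fixes h :: "real \<Rightarrow> real"
  assumes "continuous_on {a..b} h" "a \<le> b" "\<And>x. x \<in> {a..b} \<Longrightarrow> c \<le> h x"
  shows "(b - a) * c \<le> integral {a..b} h"
proof -
  have "integral {a..b} (\<lambda>_. c) \<le> integral {a..b} h"
    using assms by (intro integral_le integrable_continuous_real) auto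
  then show ?thesis
    using assms(2) by simp
qed

lemma riemann_sum_le_integral:
  fixes h :: "real \<Rightarrow> real"
  assumes h: "continuous_on {0..real N * d} h" and "0 < d" "0 \<le> \<phi>" "\<phi> \<le> d"
    and oscillation: "\<And>x y. x \<in> {0..real N * d} \<Longrightarrow> y \<in> {0..real N * d} \<Longrightarrow> \<bar>x - y\<bar> \<le> d \<Longrightarrow> h y \<le> h x + \<eta>"
  shows "d * (\<Sum>k<N. h (\<phi> + real k * d)) \<le> integral {0..real N * d} h + real N * d * \<eta>"
proof -
  have cell: "d * (h (\<phi> + real k * d) - \<eta>) \<le> integral {real k * d..real (Suc k) * d} h" if "k < N" for k
  proof -
    let ?\<theta> = "\<phi> + real k * d" and ?I = "{real k * d..real (Suc k) * d}"
    have "real (Suc k) * d \<le> real N * d"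
      using \<open>k < N\<close> \<open>0 < d\<close> by (intro mult_right_mono) auto
    then have "?I \<subseteq> {0..real N * d}" "?\<theta> \<in> ?I"
      using assms(2-4) by (auto simp: algebra_simps)
    have "h ?\<theta> - \<eta> \<le> h x" if "x \<in> ?I" for x
    proof -
      have "x \<in> {0..real N * d}" "?\<theta> \<in> {0..real N * d}"
        using that \<open>?I \<subseteq> _\<close> \<open>?\<theta> \<in> ?I\<close> by blast+
      moreover have "\<bar>x - ?\<theta>\<bar> \<le> d"
        using that \<open>?\<theta> \<in> ?I\<close> by (auto simp: abs_le_iff distrib_right)
      ultimately show ?thesis
        using oscillation[of x ?\<theta>] by simp
    qed
    then have "(real (Suc k) * d - real k * d) * (h ?\<theta> - \<eta>) \<le> integral ?I h"
      using \<open>0 < d\<close> by (intro length_mult_le_integral continuous_on_subset[OF h \<open>?I \<subseteq> _\<close>]) auto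
    then show ?thesis
      by (simp add: algebra_simps)
  qed
  have "d * (\<Sum>k<N. h (\<phi> + real k * d)) - real N * d * \<eta> = (\<Sum>k<N. d * (h (\<phi> + real k * d) - \<eta>))"
    by (simp add: sum_subtractf sum_distrib_left algebra_simps)
  also have "\<dots> \<le> (\<Sum>k<N. integral {real k * d..real (Suc k) * d} h)"
    using cell by (intro sum_mono) auto
  also have "\<dots> = integral {0..real N * d} h"
    using integral_uniform_partition[of h N d] h \<open>0 < d\<close> by (simp add: integrable_continuous_real)
  finally show ?thesis
    by simp
qed

lemma exists_riemann_sum_le_integral:
  fixes h :: "real \<Rightarrow> real"
  assumes h: "continuous_on {0..L} h" and "0 < L" "0 < \<epsilon>"
  obtains N :: nat where "0 < N" "\<And>\<phi>. 0 \<le> \<phi> \<Longrightarrow> \<phi> \<le> L / N \<Longrightarrow>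
      (L / N) * (\<Sum>k<N. h (\<phi> + real k * (L / N))) \<le> integral {0..L} h + \<epsilon>"
proof -
  have "uniformly_continuous_on {0..L} h"
    using h by (rule compact_uniformly_continuous) simp
  then obtain \<delta> where "0 < \<delta>" and \<delta>:
    "\<And>x x'. x \<in> {0..L} \<Longrightarrow> x' \<in> {0..L} \<Longrightarrow> dist x' x < \<delta> \<Longrightarrow> dist (h x') (h x) < \<epsilon> / L"
    using \<open>0 < L\<close> \<open>0 < \<epsilon>\<close> unfolding uniformly_continuous_on_def by (metis divide_pos_pos)
  define N where "N = nat \<lceil>L / \<delta>\<rceil> + 1"
  define d where "d = L / N"
  have "0 < N" "0 < d" and L: "real N * d = L"
    using \<open>0 < L\<close> by (simp_all add: N_def d_def)
  have "L / \<delta> < real N"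
    by (simp add: N_def) linarith
  then have "d < \<delta>"
    using \<open>0 < \<delta>\<close> \<open>0 < N\<close> by (simp add: d_def field_simps)
  have oscillation: "h y \<le> h x + \<epsilon> / L" if "x \<in> {0..L}" "y \<in> {0..L}" "\<bar>x - y\<bar> \<le> d" for x y
    using \<delta>[of x y] that \<open>d < \<delta>\<close> by (auto simp: dist_real_def abs_less_iff abs_le_iff)
  show ?thesis
  proof (rule that[OF \<open>0 < N\<close>], fold d_def)
    fix \<phi> assume "0 \<le> \<phi>" "\<phi> \<le> d"
    then show "d * (\<Sum>k<N. h (\<phi> + real k * d)) \<le> integral {0..L} h + \<epsilon>"
      using riemann_sum_le_integral[of N d h \<phi> "\<epsilon> / L"] h oscillation \<open>0 < d\<close> \<open>0 < L\<close>
      by (simp add: L)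
  qed
qed

lemma exists_equally_spaced_sum_ge_ln_norm:
  fixes p :: "complex \<Rightarrow> complex" and h :: "real \<Rightarrow> real"
  assumes p: "p holomorphic_on UNIV" "p 0 \<noteq> 0" and "0 < N"
    and majorant: "\<And>\<theta>. \<theta> \<in> {0..2*pi} \<Longrightarrow> p (cis \<theta>) \<noteq> 0 \<Longrightarrow> ln (cmod (p (cis \<theta>))) \<le> h \<theta>"
  obtains \<phi> where "0 \<le> \<phi>" "\<phi> \<le> 2*pi/N" "real N * ln (cmod (p 0)) \<le> (\<Sum>k<N. h (\<phi> + real k * (2*pi/N)))"
proof -
  obtain \<phi> where \<phi>: "0 \<le> \<phi>" "\<phi> \<le> 2*pi/N"
    and max: "cmod (p 0) ^ N \<le> (\<Prod>k<N. cmod (p (cis (\<phi> + real k * (2*pi/N)))))"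
    using norm_power_le_prod_equally_spaced[OF p(1) \<open>0 < N\<close>] by blast
  define \<theta> where "\<theta> k = \<phi> + real k * (2*pi/N)" for k
  have max: "cmod (p 0) ^ N \<le> (\<Prod>k<N. cmod (p (cis (\<theta> k))))"
    using max by (simp add: \<theta>_def)
  have "0 < cmod (p 0) ^ N" using p(2) by simp
  have nonzero: "p (cis (\<theta> k)) \<noteq> 0" if "k < N" for k
  proof
    assume "p (cis (\<theta> k)) = 0"
    then have "(\<Prod>k<N. cmod (p (cis (\<theta> k)))) = 0"
      using that by (intro prod_zero) auto
    then show False
      using max \<open>0 < cmod (p 0) ^ N\<close> by linarith
  qed
  have range: "\<theta> k \<in> {0..2*pi}" if "k < N" for k
  proof -
    have "\<theta> k \<le> (real k + 1) * (2*pi/N)"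
      unfolding \<theta>_def distrib_right mult_1_left using \<phi>(2) by linarith
    also have "\<dots> \<le> real N * (2*pi/N)"
      using that by (intro mult_right_mono) auto
    finally show ?thesis
      using \<phi>(1) \<open>0 < N\<close> by (simp add: \<theta>_def)
  qed
  have "real N * ln (cmod (p 0)) = ln (cmod (p 0) ^ N)"
    using p(2) by (simp add: ln_realpow)
  also have "\<dots> \<le> ln (\<Prod>k<N. cmod (p (cis (\<theta> k))))"
    using max \<open>0 < cmod (p 0) ^ N\<close> by (subst ln_le_cancel_iff) auto
  also have "\<dots> = (\<Sum>k<N. ln (cmod (p (cis (\<theta> k)))))"
    using nonzero by (subst ln_prod) auto
  also have "\<dots> \<le> (\<Sum>k<N. h (\<theta> k))"
    using nonzero range majorant by (intro sum_mono) auto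
  finally show ?thesis
    using that \<phi> by (simp add: \<theta>_def)
qed

text \<open>Jensen's inequality \<open>ln |p(0)| \<le> (2\<pi>)\<^sup>-\<^sup>1 \<integral> ln |p(e\<^sup>i\<^sup>\<theta>)| d\<theta>\<close>, stated for continuous majorants
  of \<open>ln |p(e\<^sup>i\<^sup>\<theta>)|\<close> (which may be \<open>-\<infinity>\<close> at zeros of \<open>p\<close>).\<close>

lemma ln_norm_le_circle_mean:
  fixes p :: "complex \<Rightarrow> complex" and h :: "real \<Rightarrow> real"
  assumes p: "p holomorphic_on UNIV" "p 0 \<noteq> 0" and h: "continuous_on {0..2*pi} h"
    and majorant: "\<And>\<theta>. \<theta> \<in> {0..2*pi} \<Longrightarrow> p (cis \<theta>) \<noteq> 0 \<Longrightarrow> ln (cmod (p (cis \<theta>))) \<le> h \<theta>"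
  shows "ln (cmod (p 0)) \<le> integral {0..2*pi} h / (2*pi)"
proof -
  have "2*pi * ln (cmod (p 0)) \<le> integral {0..2*pi} h + \<epsilon>" if "0 < \<epsilon>" for \<epsilon>
  proof -
    obtain N :: nat where "0 < N" and riemann: "\<And>\<phi>. 0 \<le> \<phi> \<Longrightarrow> \<phi> \<le> 2*pi/N \<Longrightarrow>
        (2*pi/N) * (\<Sum>k<N. h (\<phi> + real k * (2*pi/N))) \<le> integral {0..2*pi} h + \<epsilon>"
      using exists_riemann_sum_le_integral[OF h _ \<open>0 < \<epsilon>\<close>] by auto
    then obtain \<phi> where \<phi>: "0 \<le> \<phi>" "\<phi> \<le> 2*pi/N"
      and sum: "real N * ln (cmod (p 0)) \<le> (\<Sum>k<N. h (\<phi> + real k * (2*pi/N)))"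
      using exists_equally_spaced_sum_ge_ln_norm[OF p _ majorant] by blast
    have "2*pi * ln (cmod (p 0)) = (2*pi/N) * (real N * ln (cmod (p 0)))"
      using \<open>0 < N\<close> by simp
    also have "\<dots> \<le> (2*pi/N) * (\<Sum>k<N. h (\<phi> + real k * (2*pi/N)))"
      using sum by (intro mult_left_mono) auto
    also have "\<dots> \<le> integral {0..2*pi} h + \<epsilon>"
      using riemann[OF \<phi>] .
    finally show ?thesis .
  qed
  then have "2*pi * ln (cmod (p 0)) \<le> integral {0..2*pi} h"
    by (rule field_le_epsilon)
  then show ?thesis
    by (simp add: field_simps)
qed

definition ln_norm :: "('a \<Rightarrow> complex) \<Rightarrow> 'a \<Rightarrow> ereal" where
  "ln_norm F z = (if F z = 0 then -\<infinity> else ereal (ln (cmod (F z))))"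

lemma ln_norm_less_iff: "ln_norm F z < ereal c \<longleftrightarrow> cmod (F z) < exp c"
proof (cases "F z = 0")
  case False
  then have "ln (cmod (F z)) < c \<longleftrightarrow> exp (ln (cmod (F z))) < exp c"
    by (simp only: exp_less_cancel_iff)
  then show ?thesis
    using False by (simp add: ln_norm_def)
qed (simp add: ln_norm_def)

lemma psh_on_ln_norm:
  fixes F :: "complex^'n \<Rightarrow> complex"
  assumes cont: "continuous_on UNIV F"
    and hol: "\<And>a b. (\<lambda>\<zeta>. F (\<chi> l. a$l + \<zeta> * b$l)) holomorphic_on UNIV"
  shows "psh_on UNIV (ln_norm F)"
  unfolding psh_on_def
proof (intro conjI allI impI ballI)
  fix z :: "complex^'n"
  show "ln_norm F z < \<infinity>" by (simp add: ln_norm_def)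
next
  fix c :: real
  have "open {z. cmod (F z) < exp c}"
    using cont by (intro open_Collect_less continuous_intros) auto
  then show "openin (top_of_set UNIV) {z \<in> UNIV. ln_norm F z < ereal c}"
    by (simp add: ln_norm_less_iff)
next
  fix a b :: "complex^'n" and h :: "real \<Rightarrow> real"
  assume h: "continuous_on {0..2*pi} h"
    and majorant: "\<forall>\<theta>\<in>{0..2*pi}. ln_norm F (\<chi> l. a$l + cis \<theta> * b$l) \<le> ereal (h \<theta>)"
  define p where "p = (\<lambda>\<zeta>. F (\<chi> l. a$l + \<zeta> * b$l))"
  have "a = (\<chi> l. a$l + 0 * b$l)" by (simp add: vec_eq_iff)
  then have p0: "p 0 = F a" by (simp add: p_def)
  show "ln_norm F a \<le> ereal (integral {0..2*pi} h / (2*pi))"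
  proof (cases "F a = 0")
    case False
    have "ln (cmod (p 0)) \<le> integral {0..2*pi} h / (2*pi)"
    proof (rule ln_norm_le_circle_mean[OF _ _ h])
      fix \<theta> assume "\<theta> \<in> {0..2*pi}" "p (cis \<theta>) \<noteq> 0"
      then show "ln (cmod (p (cis \<theta>))) \<le> h \<theta>"
        using majorant[rule_format, OF \<open>\<theta> \<in> {0..2*pi}\<close>] by (simp add: ln_norm_def p_def)
    qed (use hol False p0 in \<open>auto simp: p_def\<close>)
    then show ?thesis
      using False p0 by (simp add: ln_norm_def)
  qed (simp add: ln_norm_def)
qed simp

lemma pluripolar_if_subset_zeros:
  fixes F :: "complex^'n \<Rightarrow> complex"
  assumes "continuous_on UNIV F" "\<And>a b. (\<lambda>\<zeta>. F (\<chi> l. a$l + \<zeta> * b$l)) holomorphic_on UNIV"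
    and "F w \<noteq> 0" "\<forall>z\<in>E. F z = 0"
  shows "pluripolar E"
  unfolding pluripolar_def
proof
  fix p assume "p \<in> E"
  show "\<exists>V u. p \<in> V \<and> open V \<and> connected V \<and> psh_on V u \<and> (\<exists>z\<in>V. u z \<noteq> -\<infinity>) \<and> (\<forall>z\<in>E \<inter> V. u z = -\<infinity>)"
    using assms psh_on_ln_norm[OF assms(1,2)]
    by (intro exI[of _ UNIV] exI[of _ "ln_norm F"]) (auto simp: ln_norm_def)
qed

section \<open>Logarithmic images of Reinhardt sets\<close>

lemma Log_set_mem_if_nonzero:
  fixes K :: "(complex^'n) set" and z :: "complex^'n"
  assumes "reinhardt K" "z \<in> K" "\<And>l. z$l \<noteq> 0"
  shows "(\<chi> l. ln (cmod (z$l))) \<in> Log_set K"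
proof -
  have "(\<chi> l. cis ((\<chi> l. - Arg (z$l))$l) * z$l) \<in> K"
    using assms(1,2) unfolding reinhardt_def by blast
  moreover have "cis (- Arg w) * w = complex_of_real (exp (ln (cmod w)))" if "w \<noteq> 0" for w
  proof -
    have "cis (- Arg w) * w = cis (- Arg w) * rcis (cmod w) (Arg w)"
      by (simp add: rcis_cmod_Arg)
    also have "\<dots> = complex_of_real (cmod w)"
      by (simp add: rcis_def cis_mult)
    finally show ?thesis using that by simp
  qed
  then have "(\<chi> l. cis ((\<chi> l. - Arg (z$l))$l) * z$l) = (\<chi> l. complex_of_real (exp ((\<chi> l. ln (cmod (z$l)))$l)))"
    using assms(3) by (simp add: vec_eq_iff)
  ultimately show ?thesis
    unfolding Log_set_def by simp
qed

lemma Log_set_nonempty: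
  fixes K :: "(complex^'n) set"
  assumes "reinhardt K" "\<not> pluripolar K"
  shows "Log_set K \<noteq> {}"
proof
  assume "Log_set K = {}"
  then have "\<forall>z\<in>K. (\<Prod>l\<in>UNIV. z$l) = 0"
    using Log_set_mem_if_nonzero[OF assms(1)] by auto
  then have "pluripolar K"
    by (intro pluripolar_if_subset_zeros[where F = "\<lambda>z::complex^'n. \<Prod>l\<in>UNIV. z$l" and w = "\<chi> l. 1"])
      (auto intro!: continuous_intros holomorphic_intros)
  with assms(2) show False ..
qed

lemma closed_Log_set:
  fixes K :: "(complex^'n) set"
  assumes "compact K"
  shows "closed (Log_set K)"
proof -
  have "Log_set K = (\<lambda>s. \<chi> l. complex_of_real (exp (s$l))) -` K"
    by (auto simp: Log_set_def)
  moreover have "continuous_on UNIV (\<lambda>s::real^'n. \<chi> l. complex_of_real (exp (s$l)))"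
    by (intro continuous_intros)
  ultimately show ?thesis
    using compact_imp_closed[OF assms] by (metis closed_vimage)
qed

lemma Log_set_uniformly_negative:
  fixes K :: "(complex^'n) set"
  assumes "K \<subseteq> unit_polydisk" "compact K"
  shows "uniformly_negative (Log_set K)"
proof (cases "K = {}")
  case True
  then show ?thesis by (auto simp: uniformly_negative_def Log_set_def intro: exI[of _ 1])
next
  case False
  have "\<exists>m<1. \<forall>z\<in>K. cmod (z$i) \<le> m" for i
  proof -
    have "continuous_on K (\<lambda>z. cmod (z$i))"
      by (intro continuous_intros)
    then obtain z0 where "z0 \<in> K" "\<And>z. z \<in> K \<Longrightarrow> cmod (z$i) \<le> cmod (z0$i)"
      using continuous_attains_sup[OF assms(2) False] by blast
    moreover have "cmod (z0$i) < 1"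
      using assms(1) \<open>z0 \<in> K\<close> by (auto simp: unit_polydisk_def)
    ultimately show ?thesis by blast
  qed
  then obtain m where m: "\<And>i. m i < 1" "\<And>i z. z \<in> K \<Longrightarrow> cmod (z$i) \<le> m i"
    by metis
  define M where "M = max (1/2) (Max (range m))"
  have "0 < M" "M < 1"
    using m(1) by (auto simp: M_def)
  have "q$i \<le> ln M" if "q \<in> Log_set K" for q :: "real^'n" and i
  proof -
    have "exp (q$i) \<le> m i"
      using m(2)[of _ i] that by (force simp: Log_set_def)
    also have "m i \<le> M"
      by (simp add: M_def le_max_iff_disj)
    finally show ?thesis
      using \<open>0 < M\<close> by (simp add: ln_ge_iff)
  qed
  then show ?thesis
    using \<open>0 < M\<close> \<open>M < 1\<close> by (auto simp: uniformly_negative_def intro!: exI[of _ "- ln M"])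
qed

theorem mainTheorem5:
  fixes K0 K1 :: "(complex^'n) set"
  assumes "K0 \<subseteq> unit_polydisk" "K1 \<subseteq> unit_polydisk"
    and "compact K0" "compact K1"
    and "reinhardt K0" "reinhardt K1"
    and "complete_log_convex K0" "complete_log_convex K1"
    and "\<not> pluripolar K0" "\<not> pluripolar K1"
  shows "(\<forall>t. 0 < t \<and> t < 1 \<longrightarrow>
            covol (copolar (mink_comb t (Log_set K0) (Log_set K1)))
              \<le> covol (copolar (Log_set K0)) powr (1 - t) * covol (copolar (Log_set K1)) powr t)
       \<and> ((\<exists>t. 0 < t \<and> t < 1 \<and>
            covol (copolar (mink_comb t (Log_set K0) (Log_set K1)))
              = covol (copolar (Log_set K0)) powr (1 - t) * covol (copolar (Log_set K1)) powr t)
          \<longrightarrow> Log_set K0 = Log_set K1)"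
proof -
  have ne: "Log_set K0 \<noteq> {}" "Log_set K1 \<noteq> {}"
    using assms(5-10) by (simp_all add: Log_set_nonempty)
  have neg: "uniformly_negative (Log_set K0)" "uniformly_negative (Log_set K1)"
    using assms(1-4) by (simp_all add: Log_set_uniformly_negative)
  have "closed (Log_set K0)" "closed (Log_set K1)"
    using assms(3,4) by (simp_all add: closed_Log_set)
  moreover have "convex (Log_set K0)" "\<forall>q\<in>Log_set K0. \<forall>z\<in>neg_orthant. q + z \<in> Log_set K0"
    and "convex (Log_set K1)" "\<forall>q\<in>Log_set K1. \<forall>z\<in>neg_orthant. q + z \<in> Log_set K1"
    using assms(7,8) by (simp_all add: complete_log_convex_def)
  ultimately show ?thesis
    using covol_copolar_mink_comb_le[OF ne neg] covol_copolar_mink_comb_eq_imp_eq[OF ne neg]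
    by blast
qed

end
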